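(* Let $p_0>p_1>p_2\geq\ldots\geq p_N$ be reals in $[0,1]$ with $p_0-p_1=p_1-p_2$. Define $\mathbf{p}^0,\ldots,\mathbf{p}^N\in[0,1]^N$ by $\mathbf{p}^0_i=p_i$ for $1\le i\le N$, and for $1\le j\le N$, $\mathbf{p}^j_i=p_i$ ($i\ne j$), $\mathbf{p}^j_j=p_0$. Then for all $1\leq j\leq N$, $$\frac14H(\mathbf{p}^0)\leq H(\mathbf{p}^j)\leq 2H(\mathbf{p}^0).$$
   Context: For a vector $\mathbf{q}$ with a unique largest entry $q_{i^*}$, $H(\mathbf{q})=\sum_{i\neq i^*}(q_{i^*}-q_i)^{-2}$. Thus $H(\mathbf{p}^0)=\sum_{i\ge2}(p_1-p_i)^{-2}$ and $H(\mathbf{p}^j)=\sum_{i\ne j}(p_0-p_i)^{-2}$ for $j\ge1$. *)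

theory Defs
  imports Main Complex_Main
begin

text \<open>Vectors in [0,1]^N are represented as functions nat => real on the index set {1..N}.
  For a vector q with a unique largest entry q(istar), H q = sum over i ~= istar of (q istar - q i)^(-2).\<close>

definition top_index :: "nat \<Rightarrow> (nat \<Rightarrow> real) \<Rightarrow> nat" where
  "top_index N q = (THE i. i \<in> {1..N} \<and> (\<forall>k\<in>{1..N}. k \<noteq> i \<longrightarrow> q k < q i))"

definition H :: "nat \<Rightarrow> (nat \<Rightarrow> real) \<Rightarrow> real" where
  "H N q = (let s = top_index N q in
     \<Sum>i\<in>{1..N} - {s}. 1 / (q s - q i)^2)"

definition pvec :: "(nat \<Rightarrow> real) \<Rightarrow> nat \<Rightarrow> (nat \<Rightarrow> real)" where
  "pvec p j = (\<lambda>i. if j \<ge> 1 \<and> i = j then p 0 else p i)"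

end

theory Submission
  imports Defs
begin

text \<open>Write d = p 0 - p 1 = p 1 - p 2 and x i = p 1 - p i \<ge> d for i \<ge> 2. Then H(p^0) is the
  sum of the x i ^ -2, while H(p^j) sums (x i + d) ^ -2 over i \<ge> 2, i \<noteq> j, plus d ^ -2 if j \<noteq> 1.
  Since x i \<le> x i + d \<le> 2 x i, each such term lies between a quarter of x i ^ -2 and x i ^ -2.
  For j \<noteq> 1 the term x j ^ -2 of H(p^0) is traded for d ^ -2, which dominates it and is itself
  the term x 2 ^ -2 of H(p^0).\<close>

lemma top_index_eqI:
  assumes "s \<in> {1..N}" "\<And>k. k \<in> {1..N} \<Longrightarrow> k \<noteq> s \<Longrightarrow> q k < q s"
  shows "top_index N q = s"
  unfolding top_index_def
proof (rule the_equality)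
  show "s \<in> {1..N} \<and> (\<forall>k\<in>{1..N}. k \<noteq> s \<longrightarrow> q k < q s)"
    using assms by blast
next
  fix i assume "i \<in> {1..N} \<and> (\<forall>k\<in>{1..N}. k \<noteq> i \<longrightarrow> q k < q i)"
  then show "i = s" using assms by (metis less_asym)
qed

lemma H_eqI:
  assumes "s \<in> {1..N}" "\<And>k. k \<in> {1..N} \<Longrightarrow> k \<noteq> s \<Longrightarrow> q k < q s"
  shows "H N q = (\<Sum>i\<in>{1..N} - {s}. 1 / (q s - q i)^2)"
  using top_index_eqI[of s N q] assms by (simp add: H_def)

lemma pvec_0 [simp]: "pvec p 0 = p"
  by (simp add: pvec_def)

lemma inverse_square_antimono:
  fixes x y :: real
  assumes "0 < x" "x \<le> y"
  shows "1 / y^2 \<le> 1 / x^2"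
  using assms by (simp add: frac_le power_mono)

lemma inverse_square_double_le:
  fixes x y :: real
  assumes "0 < y" "y \<le> 2 * x"
  shows "1 / x^2 / 4 \<le> 1 / y^2"
  using inverse_square_antimono[OF assms] by (simp add: power_mult_distrib)

lemma sum_between_fraction:
  fixes a b :: "'a \<Rightarrow> real" and c :: real
  assumes "\<And>i. i \<in> A \<Longrightarrow> a i / c \<le> b i \<and> b i \<le> a i"
  shows "sum a A / c \<le> sum b A \<and> sum b A \<le> sum a A"
  using assms by (auto simp: sum_divide_distrib intro: sum_mono)

locale equal_gaps_profile =
  fixes p :: "nat \<Rightarrow> real" and N :: nat
  assumes N_ge_2: "N \<ge> 2"
    and p1_less_p0: "p 1 < p 0" and p2_less_p1: "p 2 < p 1"
    and antimono_tail: "\<And>i. 2 \<le> i \<Longrightarrow> i < N \<Longrightarrow> p (Suc i) \<le> p i"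
    and equal_gaps: "p 0 - p 1 = p 1 - p 2"
begin

definition gap :: real where "gap = p 1 - p 2"

lemma gap_pos: "gap > 0"
  using p2_less_p1 by (simp add: gap_def)

lemma tail_le_p2: "2 \<le> i \<Longrightarrow> i \<le> N \<Longrightarrow> p i \<le> p 2"
proof (induction i rule: dec_induct)
  case (step m)
  then show ?case using antimono_tail[of m] by simp
qed simp

lemma gap_le: "i \<in> {2..N} \<Longrightarrow> gap \<le> p 1 - p i"
  using tail_le_p2[of i] by (auto simp: gap_def)

lemma p0_minus: "p 0 - p i = (p 1 - p i) + gap"
  using equal_gaps by (simp add: gap_def)

lemma H_p0: "H N p = (\<Sum>i\<in>{2..N}. 1 / (p 1 - p i)^2)"
proof -
  have "H N p = (\<Sum>i\<in>{1..N} - {1}. 1 / (p 1 - p i)^2)"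
  proof (rule H_eqI)
    fix k assume "k \<in> {1..N}" "k \<noteq> 1"
    then show "p k < p 1" using p2_less_p1 tail_le_p2[of k] by simp
  qed (use N_ge_2 in simp)
  also have "{1..N} - {1} = {2..N}" by auto
  finally show ?thesis .
qed

lemma H_pj:
  assumes "j \<in> {1..N}"
  shows "H N (pvec p j) = (\<Sum>i\<in>{1..N} - {j}. 1 / (p 0 - p i)^2)"
proof -
  have "p k < p 0" if "k \<in> {1..N}" for k
    using that p1_less_p0 p2_less_p1 tail_le_p2[of k] by (cases "k = 1") auto
  then have "H N (pvec p j) = (\<Sum>i\<in>{1..N} - {j}. 1 / (pvec p j j - pvec p j i)^2)"
    using assms by (intro H_eqI) (auto simp: pvec_def)
  also have "\<dots> = (\<Sum>i\<in>{1..N} - {j}. 1 / (p 0 - p i)^2)"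
    using assms by (intro sum.cong) (auto simp: pvec_def)
  finally show ?thesis .
qed

lemma shifted_term_between:
  assumes "i \<in> {2..N}"
  shows "1 / (p 1 - p i)^2 / 4 \<le> 1 / (p 0 - p i)^2 \<and> 1 / (p 0 - p i)^2 \<le> 1 / (p 1 - p i)^2"
  using gap_le[OF assms] gap_pos
    inverse_square_antimono[of "p 1 - p i" "p 1 - p i + gap"]
    inverse_square_double_le[of "p 1 - p i + gap" "p 1 - p i"]
  unfolding p0_minus by simp

lemma inverse_gap_square_le_H_p0: "1 / gap^2 \<le> H N p"
proof -
  have "1 / (p 1 - p 2)^2 \<le> (\<Sum>i\<in>{2..N}. 1 / (p 1 - p i)^2)"
    using N_ge_2 by (intro member_le_sum) auto
  then show ?thesis by (simp add: H_p0 gap_def)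
qed

lemma H_pj_between:
  assumes j: "j \<in> {1..N}"
  shows "H N p / 4 \<le> H N (pvec p j) \<and> H N (pvec p j) \<le> 2 * H N p"
proof (cases "j = 1")
  case True
  then have "{1..N} - {j} = {2..N}" by auto
  then show ?thesis
    using sum_between_fraction[of "{2..N}" "\<lambda>i. 1 / (p 1 - p i)^2" 4 "\<lambda>i. 1 / (p 0 - p i)^2"]
      shifted_term_between H_p0 H_pj[OF j] sum_nonneg[of "{2..N}" "\<lambda>i. 1 / (p 1 - p i)^2"]
    by auto
next
  case False
  define S where "S = {2..N} - {j}"
  have j2: "j \<in> {2..N}" using j False by auto
  have "{1..N} - {j} - {1} = S" by (auto simp: S_def)
  then have Hj: "H N (pvec p j) = 1 / gap^2 + (\<Sum>i\<in>S. 1 / (p 0 - p i)^2)"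
    using j False equal_gaps by (simp add: H_pj sum.remove[of _ 1] gap_def)
  have H0: "H N p = 1 / (p 1 - p j)^2 + (\<Sum>i\<in>S. 1 / (p 1 - p i)^2)"
    using j2 by (simp add: H_p0 S_def sum.remove[of _ j])
  have S: "(\<Sum>i\<in>S. 1 / (p 1 - p i)^2) / 4 \<le> (\<Sum>i\<in>S. 1 / (p 0 - p i)^2)"
    "(\<Sum>i\<in>S. 1 / (p 0 - p i)^2) \<le> (\<Sum>i\<in>S. 1 / (p 1 - p i)^2)"
    using sum_between_fraction[of S "\<lambda>i. 1 / (p 1 - p i)^2" 4 "\<lambda>i. 1 / (p 0 - p i)^2"]
      shifted_term_between by (auto simp: S_def)
  have "1 / (p 1 - p j)^2 \<le> 1 / gap^2"
    using gap_le[OF j2] gap_pos by (intro inverse_square_antimono)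
  moreover have "0 \<le> 1 / (p 1 - p j)^2" by simp
  ultimately show ?thesis
    using Hj H0 S inverse_gap_square_le_H_p0 by (intro conjI) linarith+
qed

end

theorem lemma7:
  fixes p :: "nat \<Rightarrow> real" and N :: nat
  assumes "N \<ge> 2"
    and "\<And>i. i \<le> N \<Longrightarrow> 0 \<le> p i \<and> p i \<le> 1"
    and "p 0 > p 1" and "p 1 > p 2"
    and "\<And>i. 2 \<le> i \<Longrightarrow> i < N \<Longrightarrow> p i \<ge> p (Suc i)"
    and "p 0 - p 1 = p 1 - p 2"
  shows "\<forall>j\<in>{1..N}. H N (pvec p 0) / 4 \<le> H N (pvec p j) \<and> H N (pvec p j) \<le> 2 * H N (pvec p 0)"
proof -
  interpret equal_gaps_profile p N
    using assms(1,3-6) by unfold_locales auto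
  show ?thesis using H_pj_between by simp
qed

end
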